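(* Let $S$ be a finite set with a partition $S=S_0\cup\dots\cup S_n$, let $Q$ be a poset with elements $a_1,\dots,a_l$, and let $f_1,\dots,f_r$ be all the functions from $\{a_1,\dots,a_l\}$ to $\{S_0,\dots,S_n\}$. For each $i$ let $\mathcal{S}_i$ be an arbitrary family of $l$-element subsets of $S$, each having one element in $f_i(a_j)$ for every $1\le j\le l$, and suppose (after reindexing) that $\mathcal{S}_1,\dots,\mathcal{S}_{r'}$ are exactly the nonempty ones. Let $\underline{t}=(t_1,\dots,t_{r'})$ be a vector of positive integers and $\underline{w}=(w_1,\dots,w_{r'})$ a vector of non-negative reals. Let $T$ be a hereditary property of subsets of $S$ and let $\Gamma$ be an $(l,\underline{t})$-covering family of $S$. Assume that for every $G\in\Gamma$, every subset $G'\subseteq G$ with property $T$ satisfies $\underline{w/t}(G')\le x$. Then $\underline{w}(F)\le|\Gamma|\,x$ for every $F\subseteq S$ with property $T$.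
   Context: A property $T$ of subsets of $S$ is hereditary if every subset of a set with property $T$ has property $T$. A family $\Gamma$ of subsets of $S$ is $(l,\underline{t})$-covering if for each $1\le i\le r'$ and each $l$-set in $\mathcal{S}_i$, exactly $t_i$ members of $\Gamma$ contain all elements of that $l$-set. For $F\subseteq S$, let $f_i(F)$ be the number of $l$-sets in $\mathcal{S}_i$ all of whose elements lie in $F$, and define $\underline{w}(F)=\sum_{i=1}^{r'} w_i f_i(F)$; $\underline{w/t}$ denotes the weight vector $(w_1/t_1,\dots,w_{r'}/t_{r'})$, so $\underline{w/t}(F)=\sum_{i=1}^{r'}\frac{w_i}{t_i}f_i(F)$. *)

theory Defs
  imports Complex_Main "HOL-Library.Multiset" "HOL-Library.FuncSet"
begin

definition hereditary :: "'a set \<Rightarrow> ('a set \<Rightarrow> bool) \<Rightarrow> bool" where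
  "hereditary S T \<longleftrightarrow> (\<forall>X. X \<subseteq> S \<longrightarrow> T X \<longrightarrow> (\<forall>Y. Y \<subseteq> X \<longrightarrow> T Y))"

definition fcount :: "'a set set \<Rightarrow> 'a set \<Rightarrow> nat" where
  "fcount SS F = card {X \<in> SS. X \<subseteq> F}"

definition weight :: "'i set \<Rightarrow> ('i \<Rightarrow> real) \<Rightarrow> ('i \<Rightarrow> 'a set set) \<Rightarrow> 'a set \<Rightarrow> real" where
  "weight I w SS F = (\<Sum>i\<in>I. w i * real (fcount (SS i) F))"

definition covering :: "'a set \<Rightarrow> 'i set \<Rightarrow> ('i \<Rightarrow> 'a set set) \<Rightarrow> ('i \<Rightarrow> nat) \<Rightarrow> 'a set multiset \<Rightarrow> bool" where
  "covering S I SS t \<Gamma> \<longleftrightarrow> (\<forall>G\<in>#\<Gamma>. G \<subseteq> S) \<and>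
     (\<forall>i\<in>I. \<forall>X\<in>SS i. size (filter_mset (\<lambda>G. X \<subseteq> G) \<Gamma>) = t i)"

end

theory Submission
  imports Defs
begin

text \<open>Double counting: by the covering property, summing the weights of the traces
  F \<inter> G over all G in \<Gamma> counts every l-set of SS i inside F exactly t i times,
  so \<open>weight w F\<close> is the sum over \<Gamma> of \<open>weight (w/t) (F \<inter> G)\<close>. Heredity makes each
  F \<inter> G admissible, hence each summand is at most x.\<close>

lemma sum_mset_card_eq_sum_size_filter_mset:
  assumes "finite A"
  shows "(\<Sum>G\<in>#\<Gamma>. card {X\<in>A. P X G}) = (\<Sum>X\<in>A. size (filter_mset (P X) \<Gamma>))"
proof (induction \<Gamma>)
  case (add G \<Gamma>)
  have "card {X\<in>A. P X G} = (\<Sum>X\<in>A. if P X G then 1 else 0)"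
    using assms by (simp add: sum.If_cases Int_def conj_commute)
  with add show ?case by (auto simp add: sum.distrib[symmetric] intro!: sum.cong)
qed simp

lemma sum_sum_mset_swap:
  fixes g :: "'i \<Rightarrow> 'b \<Rightarrow> 'c::comm_monoid_add"
  shows "(\<Sum>i\<in>I. \<Sum>G\<in>#\<Gamma>. g i G) = (\<Sum>G\<in>#\<Gamma>. \<Sum>i\<in>I. g i G)"
  by (induction \<Gamma>) (simp_all add: sum.distrib)

lemma sum_mset_fcount_Int:
  assumes "finite F" and "\<forall>X\<in>SS. size (filter_mset (\<lambda>G. X \<subseteq> G) \<Gamma>) = t"
  shows "(\<Sum>G\<in>#\<Gamma>. fcount SS (F \<inter> G)) = t * fcount SS F"
proof -
  have "{X \<in> SS. X \<subseteq> F} \<subseteq> Pow F"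
    by auto
  then have fin: "finite {X \<in> SS. X \<subseteq> F}"
    by (rule finite_subset) (simp add: assms(1))
  have "(\<Sum>G\<in>#\<Gamma>. fcount SS (F \<inter> G)) = (\<Sum>G\<in>#\<Gamma>. card {X \<in> {X \<in> SS. X \<subseteq> F}. X \<subseteq> G})"
    unfolding fcount_def by (intro arg_cong[where f = sum_mset] image_mset_cong) (auto intro: arg_cong[where f = card])
  also have "\<dots> = (\<Sum>X\<in>{X \<in> SS. X \<subseteq> F}. size (filter_mset (\<lambda>G. X \<subseteq> G) \<Gamma>))"
    by (rule sum_mset_card_eq_sum_size_filter_mset[OF fin])
  also have "\<dots> = t * fcount SS F"
    using assms(2) by (simp add: fcount_def)
  finally show ?thesis .
qed

lemma weight_eq_sum_mset_weight_Int:
  assumes "finite F" and "covering S I SS t \<Gamma>" and "\<forall>i\<in>I. t i > 0"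
  shows "weight I w SS F = (\<Sum>G\<in>#\<Gamma>. weight I (\<lambda>i. w i / real (t i)) SS (F \<inter> G))"
proof -
  have summand: "w i * real (fcount (SS i) F) = (\<Sum>G\<in>#\<Gamma>. w i / real (t i) * real (fcount (SS i) (F \<inter> G)))"
    if "i \<in> I" for i
  proof -
    have count_nat: "(\<Sum>G\<in>#\<Gamma>. fcount (SS i) (F \<inter> G)) = t i * fcount (SS i) F"
      using assms(1,2) that unfolding covering_def by (intro sum_mset_fcount_Int) auto
    have count_real: "(\<Sum>G\<in>#\<Gamma>. real (fcount (SS i) (F \<inter> G))) = real (t i) * real (fcount (SS i) F)"
      using arg_cong[OF count_nat, of real] by (simp add: multiset.map_comp comp_def)
    have "w i * real (fcount (SS i) F) = w i / real (t i) * (real (t i) * real (fcount (SS i) F))"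
      using assms(3) that by force
    also have "\<dots> = (\<Sum>G\<in>#\<Gamma>. w i / real (t i) * real (fcount (SS i) (F \<inter> G)))"
      unfolding count_real[symmetric] by (rule sum_mset_distrib_left)
    finally show ?thesis .
  qed
  show ?thesis
    unfolding weight_def sum_sum_mset_swap[symmetric] by (intro sum.cong refl summand)
qed

theorem lemma4p1:
  fixes S :: "'a set" and P :: "nat \<Rightarrow> 'a set" and n :: nat
    and Q :: "'q::order set" and l :: nat
    and SS :: "('q \<Rightarrow> nat) \<Rightarrow> 'a set set"
    and t :: "('q \<Rightarrow> nat) \<Rightarrow> nat" and w :: "('q \<Rightarrow> nat) \<Rightarrow> real"
    and T :: "'a set \<Rightarrow> bool" and \<Gamma> :: "'a set multiset" and x :: real
  assumes finS: "finite S"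
    and part_cover: "(\<Union>k\<in>{0..n}. P k) = S"
    and part_disj: "\<And>j k. j \<le> n \<Longrightarrow> k \<le> n \<Longrightarrow> j \<noteq> k \<Longrightarrow> P j \<inter> P k = {}"
    and finQ: "finite Q" and l_def: "l = card Q"
    and fam: "\<And>f X. f \<in> Q \<rightarrow>\<^sub>E {0..n} \<Longrightarrow> X \<in> SS f \<Longrightarrow>
               X \<subseteq> S \<and> card X = l \<and> (\<exists>g. bij_betw g Q X \<and> (\<forall>a\<in>Q. g a \<in> P (f a)))"
    and t_pos: "\<And>f. f \<in> Q \<rightarrow>\<^sub>E {0..n} \<Longrightarrow> SS f \<noteq> {} \<Longrightarrow> t f > 0"
    and w_nonneg: "\<And>f. f \<in> Q \<rightarrow>\<^sub>E {0..n} \<Longrightarrow> SS f \<noteq> {} \<Longrightarrow> w f \<ge> 0"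
    and her: "hereditary S T"
    and cov: "covering S {f \<in> Q \<rightarrow>\<^sub>E {0..n}. SS f \<noteq> {}} SS t \<Gamma>"
    and bound: "\<And>G G'. G \<in># \<Gamma> \<Longrightarrow> G' \<subseteq> G \<Longrightarrow> T G' \<Longrightarrow>
               weight {f \<in> Q \<rightarrow>\<^sub>E {0..n}. SS f \<noteq> {}} (\<lambda>f. w f / real (t f)) SS G' \<le> x"
  shows "\<forall>F. F \<subseteq> S \<longrightarrow> T F \<longrightarrow>
           weight {f \<in> Q \<rightarrow>\<^sub>E {0..n}. SS f \<noteq> {}} w SS F \<le> real (size \<Gamma>) * x"
proof (intro allI impI)
  fix F assume FS: "F \<subseteq> S" and TF: "T F"
  define I where "I = {f \<in> Q \<rightarrow>\<^sub>E {0..n}. SS f \<noteq> {}}"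
  have "weight I w SS F = (\<Sum>G\<in>#\<Gamma>. weight I (\<lambda>f. w f / real (t f)) SS (F \<inter> G))"
    using finite_subset[OF FS finS] cov t_pos unfolding I_def
    by (intro weight_eq_sum_mset_weight_Int) auto
  also have "\<dots> \<le> (\<Sum>G\<in>#\<Gamma>. x)"
  proof (rule sum_mset_mono)
    fix G assume "G \<in># \<Gamma>"
    moreover have "T (F \<inter> G)"
      using her FS TF unfolding hereditary_def by blast
    ultimately show "weight I (\<lambda>f. w f / real (t f)) SS (F \<inter> G) \<le> x"
      using bound unfolding I_def by blast
  qed
  finally show "weight {f \<in> Q \<rightarrow>\<^sub>E {0..n}. SS f \<noteq> {}} w SS F \<le> real (size \<Gamma>) * x"
    unfolding I_def by simp
qed

end
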